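(* Let $\Psi_n$ be a discrete-time Markov chain on a measurable space $(X,\mathcal{B})$, let $X=G\cup B$ be a partition into measurable sets, and let $\mathfrak{C}\in\mathcal{B}$ with $\mathfrak{C}\subset G$. Let $T_0=0$ and $T_{n+1}=\inf\{k>T_n:\Psi_k\in G\}$, let $\hat\Psi_n=\Psi_{T_n}$ (the $G$-induced chain), $\tau_{\mathfrak{C}}=\inf\{n>0:\Psi_n\in\mathfrak{C}\}$ and $\hat\tau_{\mathfrak{C}}=\inf\{n>0:\hat\Psi_n\in\mathfrak{C}\}$. Assume: (i) there is a constant $\alpha>0$ and a function $\xi:X\to[1,\infty)$ with $\sup_{x\in G}\xi(x)\le\xi_1<\infty$ such that for every $n$ and $k$, $\mathbb{P}[T_{n+1}-T_n>k\mid\Psi_{T_n}]\le\xi(\Psi_{T_n})k^{-\alpha}$; (ii) there are a constant $\omega>0$ and a function $\eta:X\to(0,\infty)$ such that $\mathbb{P}_{\Psi_0}[\hat\tau_{\mathfrak{C}}>k]\le\eta(\Psi_0)e^{-\omega k}$ for all $k$. Then for any $\epsilon>0$ there is a constant $c$ such that $$\mathbb{P}_{\Psi_0}[\tau_{\mathfrak{C}}>n]\le c\,(\eta(\Psi_0)+\xi(\Psi_0))\,n^{-(\alpha-\epsilon)}$$ for every $\Psi_0\in X$ and all $n\ge1$.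
   Context: $\mathbb{P}_{x}$ denotes probability for the chain started at $\Psi_0=x$. *)

theory Defs
  imports "HOL-Probability.Probability" "HOL-Library.Extended_Nat"
begin

text \<open>For each starting point x, P x is the path law \<open>P_x\<close>: a probability measure on a
  sample space under which the process Psi starts at x almost surely and satisfies the
  Markov property with respect to its natural filtration.\<close>
definition markov_chain ::
  "'a measure \<Rightarrow> ('a \<Rightarrow> 'a measure) \<Rightarrow> ('a \<Rightarrow> 'w measure) \<Rightarrow> (nat \<Rightarrow> 'w \<Rightarrow> 'a) \<Rightarrow> bool" where
  "markov_chain M K P Psi \<longleftrightarrow>
     K \<in> measurable M (prob_algebra M) \<and>
     (\<forall>x\<in>space M.
        prob_space (P x) \<and>
        (\<forall>n. Psi n \<in> measurable (P x) M) \<and>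
        (AE \<omega> in P x. Psi 0 \<omega> = x) \<and>
        (\<forall>n. \<forall>E\<in>sets (sigma (space (P x))
                         {Psi i -` A \<inter> space (P x) | i A. i \<le> n \<and> A \<in> sets M}).
           \<forall>A\<in>sets M.
             emeasure (P x) (E \<inter> {\<omega>\<in>space (P x). Psi (Suc n) \<omega> \<in> A})
               = (\<integral>\<^sup>+ \<omega>\<in>E. emeasure (K (Psi n \<omega>)) A \<partial>P x)))"

fun visit_time :: "(nat \<Rightarrow> 'w \<Rightarrow> 'a) \<Rightarrow> 'a set \<Rightarrow> nat \<Rightarrow> 'w \<Rightarrow> enat" where
  "visit_time Psi G 0 \<omega> = 0"
| "visit_time Psi G (Suc n) \<omega> =
     Inf {enat k | k. visit_time Psi G n \<omega> < enat k \<and> Psi k \<omega> \<in> G}"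

text \<open>The G-induced chain hat Psi_n = Psi_{T_n} (meaningful only where T_n is finite).\<close>
definition induced_chain :: "(nat \<Rightarrow> 'w \<Rightarrow> 'a) \<Rightarrow> 'a set \<Rightarrow> nat \<Rightarrow> 'w \<Rightarrow> 'a" where
  "induced_chain Psi G n \<omega> = Psi (the_enat (visit_time Psi G n \<omega>)) \<omega>"

definition return_time :: "(nat \<Rightarrow> 'w \<Rightarrow> 'a) \<Rightarrow> 'a set \<Rightarrow> 'w \<Rightarrow> enat" where
  "return_time Psi C \<omega> = Inf {enat n | n. 0 < n \<and> Psi n \<omega> \<in> C}"

definition induced_return_time :: "(nat \<Rightarrow> 'w \<Rightarrow> 'a) \<Rightarrow> 'a set \<Rightarrow> 'a set \<Rightarrow> 'w \<Rightarrow> enat" where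
  "induced_return_time Psi G C \<omega> =
     Inf {enat n | n. 0 < n \<and> visit_time Psi G n \<omega> < \<infinity> \<and> induced_chain Psi G n \<omega> \<in> C}"

end

theory Submission
  imports Defs "HOL-Real_Asymp.Real_Asymp"
begin

text \<open>Cut the time interval [0, n] into m \<approx> (\<alpha>/\<omega>) log n blocks of length k \<approx> n/m. If the chain
  has not hit C by time n, then either the induced chain has not hit C within m steps, which has
  probability at most \<eta>(x) e^{-\<omega> m} \<le> \<eta>(x) n^{-\<alpha>}, or one of the first m excursions between visits
  to G is longer than k, which by (i) and a union bound has probability at most
  m max(\<xi>(x), \<xi>1) k^{-\<alpha>} = O(\<xi>(x) (log n)^{1+\<alpha>} n^{-\<alpha>}); the logarithm is absorbed by n^\<epsilon>.
  The Markov property enters only through hypotheses (i) and (ii); the first excursion starts at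
  x and all later ones at points of G, which is where \<xi>(x) and \<xi>1 come from.\<close>

lemma Inf_enat_le_iff: "Inf {enat k |k. P k} \<le> enat t \<longleftrightarrow> (\<exists>k\<le>t. P k)"
proof
  assume le: "Inf {enat k |k. P k} \<le> enat t"
  then have "{enat k |k. P k} \<noteq> {}" by (auto simp: Inf_enat_def split: if_splits)
  then have "Inf {enat k |k. P k} \<in> {enat k |k. P k}"
    unfolding Inf_enat_def by (auto intro: LeastI)
  with le show "\<exists>k\<le>t. P k" by force
next
  assume "\<exists>k\<le>t. P k"
  then show "Inf {enat k |k. P k} \<le> enat t" by (auto intro: Inf_lower2)
qed

lemma Inf_enat_eq_enatD: "Inf {enat k |k. P k} = enat t \<Longrightarrow> P t"
proof -
  assume eq: "Inf {enat k |k. P k} = enat t"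
  then have "{enat k |k. P k} \<noteq> {}" by (auto simp: Inf_enat_def split: if_splits)
  then have "Inf {enat k |k. P k} \<in> {enat k |k. P k}"
    unfolding Inf_enat_def by (auto intro: LeastI)
  with eq show "P t" by auto
qed

lemma visit_time_Suc_eq_enatD:
  assumes "visit_time Psi G (Suc j) w = enat t"
  shows "0 < t" and "Psi t w \<in> G"
proof -
  from assms have "Inf {enat k |k. visit_time Psi G j w < enat k \<and> Psi k w \<in> G} = enat t"
    by simp
  then have less: "visit_time Psi G j w < enat t" and "Psi t w \<in> G"
    by (auto dest: Inf_enat_eq_enatD)
  then show "Psi t w \<in> G" by simp
  show "0 < t"
  proof (rule ccontr)
    assume "\<not> 0 < t"
    with less show False by (simp add: enat_0)
  qed
qed

lemma induced_chain_in_visited_set: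
  assumes "0 < j" "visit_time Psi G j w < \<infinity>"
  shows "induced_chain Psi G j w \<in> G"
proof -
  obtain j' where j: "j = Suc j'" using assms(1) gr0_implies_Suc by blast
  obtain t where t: "visit_time Psi G j w = enat t"
    using assms(2) by (cases "visit_time Psi G j w") auto
  with j have "Psi t w \<in> G"
    using visit_time_Suc_eq_enatD(2)[of Psi G j' w t] by simp
  with t show ?thesis by (simp add: induced_chain_def)
qed

lemma enat_less_Suc_iff: "x < enat (Suc s) \<longleftrightarrow> x \<le> enat s"
  by (cases x) auto

lemma visit_time_le_sets:
  assumes Psi: "\<And>i. Psi i \<in> measurable N M" and G: "G \<in> sets M"
  shows "{w\<in>space N. visit_time Psi G j w \<le> enat t} \<in> sets N"
proof (induction j arbitrary: t)
  case 0
  then show ?case by simp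
next
  case (Suc j)
  have lt: "{w\<in>space N. visit_time Psi G j w < enat s} \<in> sets N" for s
  proof (cases s)
    case (Suc s')
    then have "{w\<in>space N. visit_time Psi G j w < enat s} = {w\<in>space N. visit_time Psi G j w \<le> enat s'}"
      by (auto simp: enat_less_Suc_iff)
    with Suc.IH show ?thesis by simp
  qed (simp add: enat_0)
  have "{w\<in>space N. visit_time Psi G (Suc j) w \<le> enat t}
     = (\<Union>s\<le>t. {w\<in>space N. visit_time Psi G j w < enat s} \<inter> (Psi s -` G \<inter> space N))"
    by (auto simp: Inf_enat_le_iff)
  also have "\<dots> \<in> sets N"
    using lt measurable_sets[OF Psi G] by auto
  finally show ?case .
qed

lemma enat_eq_iff_le_not_le_pred: "x = enat t \<longleftrightarrow> x \<le> enat t \<and> \<not> (t \<noteq> 0 \<and> x \<le> enat (t - 1))"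
  by (cases x) auto

lemma measurable_visit_time:
  assumes Psi: "\<And>i. Psi i \<in> measurable N M" and G: "G \<in> sets M"
  shows "visit_time Psi G j \<in> measurable N (count_space UNIV)"
  unfolding measurable_count_space_eq2_countable
proof (intro conjI ballI)
  fix a :: enat
  let ?le = "\<lambda>t. {w\<in>space N. visit_time Psi G j w \<le> enat t}"
  show "visit_time Psi G j -` {a} \<inter> space N \<in> sets N"
  proof (cases a)
    case (enat t)
    have "visit_time Psi G j -` {a} \<inter> space N = ?le t - (if t = 0 then {} else ?le (t - 1))"
    proof (rule set_eqI)
      fix w
      show "w \<in> visit_time Psi G j -` {a} \<inter> space N \<longleftrightarrow> w \<in> ?le t - (if t = 0 then {} else ?le (t - 1))"
        using enat_eq_iff_le_not_le_pred[of "visit_time Psi G j w" t] enat by auto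
    qed
    then show ?thesis using visit_time_le_sets[OF Psi G] by auto
  next
    case infinity
    have "visit_time Psi G j -` {a} \<inter> space N = space N - (\<Union>t. ?le t)"
      using infinity by auto (metis enat_ord_code(3) not_enat_eq order_refl)
    then show ?thesis using visit_time_le_sets[OF Psi G] by auto
  qed
qed simp

lemma visit_time_le_mult:
  assumes gaps: "\<forall>j<m. visit_time Psi G j w < \<infinity> \<longrightarrow>
      visit_time Psi G (Suc j) w - visit_time Psi G j w \<le> enat k"
  shows "j \<le> m \<Longrightarrow> visit_time Psi G j w \<le> enat (j * k)"
proof (induction j)
  case 0
  then show ?case by simp
next
  case (Suc j)
  then obtain s where s: "visit_time Psi G j w = enat s" "s \<le> j * k"
    by (cases "visit_time Psi G j w") auto
  have gap: "visit_time Psi G (Suc j) w - enat s \<le> enat k"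
    using gaps[rule_format, of j] Suc.prems s by (simp del: visit_time.simps)
  show ?case
  proof (cases "visit_time Psi G (Suc j) w")
    case (enat u)
    with gap s show ?thesis by auto
  next
    case infinity
    with gap show ?thesis by simp
  qed
qed

text \<open>If no excursion among the first m is longer than k, the first m visits to G all happen by
  time m * k \<le> n.\<close>
lemma return_time_gt_cases:
  assumes "return_time Psi C w > enat n" "m * k \<le> n"
  shows "induced_return_time Psi G C w > enat m \<or>
    (\<exists>j<m. visit_time Psi G j w < \<infinity> \<and>
       visit_time Psi G (Suc j) w - visit_time Psi G j w > enat k)"
proof (rule ccontr)
  assume "\<not> ?thesis"
  then have "induced_return_time Psi G C w \<le> enat m"
    and gaps: "\<forall>j<m. visit_time Psi G j w < \<infinity> \<longrightarrow>
      visit_time Psi G (Suc j) w - visit_time Psi G j w \<le> enat k"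
    using not_less by blast+
  then obtain i where i: "i \<le> m" "0 < i" "visit_time Psi G i w < \<infinity>" "induced_chain Psi G i w \<in> C"
    unfolding induced_return_time_def Inf_enat_le_iff by blast
  then obtain t where t: "visit_time Psi G i w = enat t"
    by (cases "visit_time Psi G i w") auto
  have "t \<le> i * k"
    using visit_time_le_mult[OF gaps i(1)] t by simp
  also have "\<dots> \<le> n"
    using i(1) assms(2) by (meson le_trans mult_le_mono1)
  finally have "t \<le> n" .
  moreover have "0 < t"
  proof -
    obtain i' where "i = Suc i'" using i(2) gr0_implies_Suc by blast
    with t show ?thesis using visit_time_Suc_eq_enatD(1)[of Psi G i' w t] by simp
  qed
  moreover have "Psi t w \<in> C"
    using i(4) t by (simp add: induced_chain_def)
  ultimately have "return_time Psi C w \<le> enat n"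
    unfolding return_time_def Inf_enat_le_iff by blast
  with assms(1) show False by simp
qed

lemma return_time_tail_le_sum:
  assumes "finite_measure N" and Psi: "\<And>i. Psi i \<in> measurable N M"
    and G: "G \<in> sets M" and C: "C \<in> sets M" and "m * k \<le> n"
  shows "measure N {w\<in>space N. return_time Psi C w > enat n}
    \<le> measure N {w\<in>space N. induced_return_time Psi G C w > enat m}
      + (\<Sum>j<m. measure N {w\<in>space N. visit_time Psi G j w < \<infinity> \<and>
           visit_time Psi G (Suc j) w - visit_time Psi G j w > enat k})"
proof -
  interpret finite_measure N by fact
  note [measurable] = measurable_visit_time[OF Psi G] Psi C
  define late where "late = {w\<in>space N. induced_return_time Psi G C w > enat m}"
  define gap where "gap j = {w\<in>space N. visit_time Psi G j w < \<infinity> \<and>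
      visit_time Psi G (Suc j) w - visit_time Psi G j w > enat k}" for j
  have gap_sets: "gap j \<in> sets N" for j
    unfolding gap_def by measurable
  have "late = {w\<in>space N. \<not> (\<exists>i\<le>m. 0 < i \<and> visit_time Psi G i w < \<infinity> \<and>
      Psi (the_enat (visit_time Psi G i w)) w \<in> C)}"
    unfolding late_def induced_return_time_def induced_chain_def
    by (simp only: not_le[symmetric] Inf_enat_le_iff)
  also have "\<dots> \<in> sets N" by measurable
  finally have late_sets: "late \<in> sets N" .
  have "{w\<in>space N. return_time Psi C w > enat n} \<subseteq> late \<union> (\<Union>j<m. gap j)"
  proof
    fix w assume "w \<in> {w\<in>space N. return_time Psi C w > enat n}"
    then show "w \<in> late \<union> (\<Union>j<m. gap j)"
      using return_time_gt_cases[of n Psi C w m k G] \<open>m * k \<le> n\<close>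
      by (auto simp: late_def gap_def simp del: visit_time.simps)
  qed
  then have "measure N {w\<in>space N. return_time Psi C w > enat n} \<le> measure N (late \<union> (\<Union>j<m. gap j))"
    using late_sets gap_sets by (intro finite_measure_mono) auto
  also have "\<dots> \<le> measure N late + measure N (\<Union>j<m. gap j)"
    using late_sets gap_sets by (intro measure_Un_le) auto
  also have "measure N (\<Union>j<m. gap j) \<le> (\<Sum>j<m. measure N (gap j))"
    using gap_sets by (intro finite_measure_subadditive_finite) auto
  finally show ?thesis
    unfolding late_def gap_def by simp
qed

lemma long_gap_prob_le:
  assumes "prob_space N" and Psi: "\<And>i. Psi i \<in> measurable N M"
    and start: "AE w in N. Psi 0 w = x"
    and xi_sup: "\<forall>y\<in>G. \<xi> y \<le> \<xi>1" and "0 \<le> \<xi> x"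
    and tail: "emeasure N {w\<in>space N. visit_time Psi G j w < \<infinity> \<and>
          induced_chain Psi G j w \<in> space M \<and>
          visit_time Psi G (Suc j) w - visit_time Psi G j w > enat k}
        \<le> (\<integral>\<^sup>+ w\<in>{w\<in>space N. visit_time Psi G j w < \<infinity> \<and> induced_chain Psi G j w \<in> space M}.
             ennreal (\<xi> (induced_chain Psi G j w) * real k powr (-\<alpha>)) \<partial>N)"
  shows "measure N {w\<in>space N. visit_time Psi G j w < \<infinity> \<and>
      visit_time Psi G (Suc j) w - visit_time Psi G j w > enat k}
    \<le> max (\<xi> x) \<xi>1 * real k powr (-\<alpha>)"
proof -
  interpret prob_space N by fact
  let ?b = "max (\<xi> x) \<xi>1 * real k powr (-\<alpha>)"
  have in_space: "induced_chain Psi G j w \<in> space M" if "w \<in> space N" for w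
    unfolding induced_chain_def using Psi that by (meson measurable_space)
  define F where "F = {w\<in>space N. visit_time Psi G j w < \<infinity>}"
  have "AE w in N. ennreal (\<xi> (induced_chain Psi G j w) * real k powr (-\<alpha>)) * indicator F w
      \<le> ennreal ?b"
    using start
  proof eventually_elim
    case (elim w)
    have "\<xi> (induced_chain Psi G j w) \<le> max (\<xi> x) \<xi>1" if "w \<in> F"
    proof (cases "j = 0")
      case True
      with elim show ?thesis by (simp add: induced_chain_def zero_enat_def)
    next
      case False
      with that have "induced_chain Psi G j w \<in> G"
        using induced_chain_in_visited_set[of j Psi G w] by (simp add: F_def)
      with xi_sup show ?thesis by fastforce
    qed
    then show ?case
      by (cases "w \<in> F") (auto intro!: ennreal_leI mult_right_mono)
  qed
  then have "(\<integral>\<^sup>+ w\<in>F. ennreal (\<xi> (induced_chain Psi G j w) * real k powr (-\<alpha>)) \<partial>N)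
      \<le> (\<integral>\<^sup>+ w. ennreal ?b \<partial>N)"
    by (rule nn_integral_mono_AE)
  moreover have "{w\<in>space N. visit_time Psi G j w < \<infinity> \<and> induced_chain Psi G j w \<in> space M} = F"
    using in_space by (auto simp: F_def)
  moreover have "{w\<in>space N. visit_time Psi G j w < \<infinity> \<and> induced_chain Psi G j w \<in> space M \<and>
        visit_time Psi G (Suc j) w - visit_time Psi G j w > enat k}
      = {w\<in>space N. visit_time Psi G j w < \<infinity> \<and>
        visit_time Psi G (Suc j) w - visit_time Psi G j w > enat k}"
    using in_space by (auto simp del: visit_time.simps)
  ultimately have "emeasure N {w\<in>space N. visit_time Psi G j w < \<infinity> \<and>
      visit_time Psi G (Suc j) w - visit_time Psi G j w > enat k} \<le> ennreal ?b"
    using tail by (simp add: emeasure_space_1 del: visit_time.simps)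
  moreover have "0 \<le> ?b" using \<open>0 \<le> \<xi> x\<close> by simp
  ultimately show ?thesis by (simp add: emeasure_eq_measure ennreal_le_iff)
qed

lemma return_time_tail_le_powr:
  assumes "prob_space N" and Psi: "\<And>i. Psi i \<in> measurable N M"
    and start: "AE w in N. Psi 0 w = x"
    and G: "G \<in> sets M" and C: "C \<in> sets M"
    and xi_sup: "\<forall>y\<in>G. \<xi> y \<le> \<xi>1" and "1 \<le> \<xi> x"
    and tail: "\<And>j. emeasure N {w\<in>space N. visit_time Psi G j w < \<infinity> \<and>
          induced_chain Psi G j w \<in> space M \<and>
          visit_time Psi G (Suc j) w - visit_time Psi G j w > enat k}
        \<le> (\<integral>\<^sup>+ w\<in>{w\<in>space N. visit_time Psi G j w < \<infinity> \<and> induced_chain Psi G j w \<in> space M}.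
             ennreal (\<xi> (induced_chain Psi G j w) * real k powr (-\<alpha>)) \<partial>N)"
    and induced_tail: "measure N {w\<in>space N. induced_return_time Psi G C w > enat m}
        \<le> \<eta> * exp (- \<omega> * real m)"
    and "0 \<le> \<eta>" and "m * k \<le> n"
    and exp_le: "exp (- \<omega> * real m) \<le> q"
    and blocks_le: "real m * real k powr (- \<alpha>) \<le> 2 powr \<alpha> * q"
  shows "measure N {w\<in>space N. return_time Psi C w > enat n}
    \<le> (\<eta> + \<xi> x * (max 1 \<xi>1 * 2 powr \<alpha>)) * q"
proof -
  interpret prob_space N by fact
  have "0 \<le> \<xi> x" using \<open>1 \<le> \<xi> x\<close> by simp
  have "measure N {w\<in>space N. return_time Psi C w > enat n}
    \<le> measure N {w\<in>space N. induced_return_time Psi G C w > enat m}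
      + (\<Sum>j<m. measure N {w\<in>space N. visit_time Psi G j w < \<infinity> \<and>
           visit_time Psi G (Suc j) w - visit_time Psi G j w > enat k})"
    by (rule return_time_tail_le_sum[OF finite_measure Psi G C \<open>m * k \<le> n\<close>])
  also have "\<dots> \<le> \<eta> * exp (- \<omega> * real m) + real m * (max (\<xi> x) \<xi>1 * real k powr (-\<alpha>))"
    using induced_tail sum_bounded_above[OF long_gap_prob_le[OF \<open>prob_space N\<close> Psi start
        xi_sup \<open>0 \<le> \<xi> x\<close> tail], where A = "{..<m}"]
    by (intro add_mono) simp_all
  also have "\<dots> \<le> \<eta> * q + \<xi> x * (max 1 \<xi>1 * 2 powr \<alpha>) * q"
  proof (rule add_mono)
    show "\<eta> * exp (- \<omega> * real m) \<le> \<eta> * q"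
      using exp_le \<open>0 \<le> \<eta>\<close> by (rule mult_left_mono)
    have max_le: "max (\<xi> x) \<xi>1 \<le> \<xi> x * max 1 \<xi>1"
      using \<open>1 \<le> \<xi> x\<close> by (auto simp: max_def mult_le_cancel_right1 order.trans[OF _ mult_right_mono])
    have "real m * (max (\<xi> x) \<xi>1 * real k powr (-\<alpha>)) = max (\<xi> x) \<xi>1 * (real m * real k powr (-\<alpha>))"
      by (simp add: mult_ac)
    also have "\<dots> \<le> (\<xi> x * max 1 \<xi>1) * (2 powr \<alpha> * q)"
      using \<open>1 \<le> \<xi> x\<close> by (intro mult_mono[OF max_le blocks_le]) auto
    finally show "real m * (max (\<xi> x) \<xi>1 * real k powr (-\<alpha>)) \<le> \<xi> x * (max 1 \<xi>1 * 2 powr \<alpha>) * q"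
      by (simp add: mult_ac)
  qed
  finally show ?thesis
    by (simp add: distrib_right)
qed

lemma block_decomposition:
  fixes \<alpha> \<omega> \<epsilon> :: real and n :: nat
  assumes "\<alpha> > 0" "\<omega> > 0" "\<epsilon> > 0" "n \<ge> 1"
    and growth: "(\<alpha> / \<omega> * ln n + 2) powr (1 + \<alpha>) \<le> real n powr \<epsilon>"
    and room: "2 * (\<alpha> / \<omega> * ln n + 2) \<le> real n"
  shows "\<exists>m k. 1 \<le> k \<and> m * k \<le> n \<and> exp (- \<omega> * real m) \<le> real n powr (- (\<alpha> - \<epsilon>)) \<and>
    real m * real k powr (- \<alpha>) \<le> 2 powr \<alpha> * real n powr (- (\<alpha> - \<epsilon>))"
proof -
  define y where "y = \<alpha> / \<omega> * ln n"
  define m where "m = nat \<lceil>y\<rceil> + 1"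
  define k where "k = n div m"
  have "0 \<le> y" using assms by (simp add: y_def)
  then have "real m = of_int \<lceil>y\<rceil> + 1" by (simp add: m_def)
  then have m_ge: "y \<le> real m" and m_le: "real m \<le> y + 2"
    using ceiling_correct[of y] by linarith+
  have m_pos: "real m \<ge> 1" and "n mod m < m" by (simp_all add: m_def)
  have n_pos: "real n > 0" using \<open>n \<ge> 1\<close> by simp
  have mk: "m * k \<le> n" by (simp add: k_def times_div_less_eq_dividend)
  have two_m: "2 * real m \<le> real n" using room m_le by (simp add: y_def)
  have "real n = real m * real k + real (n mod m)"
    unfolding k_def by (metis of_nat_add of_nat_mult div_mult_mod_eq mult.commute)
  also have "\<dots> < real m * real k + real m"
    using \<open>n mod m < m\<close> by simp
  finally have "real n / real m - 1 < real k"
    using m_pos by (simp add: field_simps)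
  moreover have "real n / (2 * real m) \<le> real n / real m - 1"
    using two_m m_pos by (simp add: field_simps)
  ultimately have k_ge: "real n / (2 * real m) \<le> real k" by linarith
  moreover have "1 \<le> real n / (2 * real m)" using two_m m_pos by simp
  ultimately have "1 \<le> k" by linarith
  have "exp (- \<omega> * real m) \<le> exp (- \<alpha> * ln n)"
    using m_ge assms by (simp add: y_def field_simps)
  also have "\<dots> = real n powr (- \<alpha>)" using n_pos by (simp add: powr_def)
  also have "\<dots> \<le> real n powr (- (\<alpha> - \<epsilon>))" using assms by (intro powr_mono) auto
  finally have exp_bound: "exp (- \<omega> * real m) \<le> real n powr (- (\<alpha> - \<epsilon>))" .
  have "real k powr (- \<alpha>) \<le> (real n / (2 * real m)) powr (- \<alpha>)"
    using k_ge n_pos m_pos assms by (intro powr_mono2') auto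
  also have "\<dots> = (2 * real m) powr \<alpha> * real n powr (- \<alpha>)"
    using n_pos m_pos by (simp add: powr_divide powr_minus divide_simps)
  finally have k_pow: "real k powr (- \<alpha>) \<le> (2 * real m) powr \<alpha> * real n powr (- \<alpha>)" .
  have "real m * (2 * real m) powr \<alpha> = 2 powr \<alpha> * real m powr (1 + \<alpha>)"
    using m_pos by (simp add: powr_mult powr_add)
  also have "real m powr (1 + \<alpha>) \<le> (y + 2) powr (1 + \<alpha>)"
    using m_le m_pos assms by (intro powr_mono2) auto
  also have "\<dots> \<le> real n powr \<epsilon>"
    using growth by (simp add: y_def)
  finally have m_pow: "real m * (2 * real m) powr \<alpha> \<le> 2 powr \<alpha> * real n powr \<epsilon>"
    by simp
  have "real m * real k powr (- \<alpha>) \<le> real m * ((2 * real m) powr \<alpha> * real n powr (- \<alpha>))"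
    using k_pow m_pos by (intro mult_left_mono) auto
  also have "\<dots> = (real m * (2 * real m) powr \<alpha>) * real n powr (- \<alpha>)"
    by (simp only: mult.assoc)
  also have "\<dots> \<le> (2 powr \<alpha> * real n powr \<epsilon>) * real n powr (- \<alpha>)"
    using m_pow by (intro mult_right_mono) auto
  also have "\<dots> = 2 powr \<alpha> * real n powr (- (\<alpha> - \<epsilon>))"
    by (simp add: mult.assoc powr_add[symmetric])
  finally show ?thesis using mk \<open>1 \<le> k\<close> exp_bound by blast
qed

lemma eventually_block_decomposition:
  fixes \<alpha> \<omega> \<epsilon> :: real
  assumes "\<alpha> > 0" "\<omega> > 0" "\<epsilon> > 0"
  shows "\<forall>\<^sub>F n in sequentially. \<exists>m k. 1 \<le> k \<and> m * k \<le> n \<and>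
    exp (- \<omega> * real m) \<le> real n powr (- (\<alpha> - \<epsilon>)) \<and>
    real m * real k powr (- \<alpha>) \<le> 2 powr \<alpha> * real n powr (- (\<alpha> - \<epsilon>))"
proof -
  have a: "\<alpha> / \<omega> > 0" using assms by simp
  have "\<forall>\<^sub>F x in at_top. (\<alpha> / \<omega> * ln x + 2) powr (1 + \<alpha>) \<le> x powr \<epsilon>"
    using a assms by real_asymp
  moreover have "\<forall>\<^sub>F x in at_top. 2 * (\<alpha> / \<omega> * ln x + 2) \<le> x"
    using a by real_asymp
  moreover have "\<forall>\<^sub>F x in at_top. (1::real) \<le> x"
    by (rule eventually_ge_at_top)
  ultimately have "\<forall>\<^sub>F x in at_top. (\<alpha> / \<omega> * ln x + 2) powr (1 + \<alpha>) \<le> x powr \<epsilon> \<and>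
      2 * (\<alpha> / \<omega> * ln x + 2) \<le> x \<and> 1 \<le> x"
    by eventually_elim blast
  then have "\<forall>\<^sub>F n in sequentially. (\<alpha> / \<omega> * ln (real n) + 2) powr (1 + \<alpha>) \<le> real n powr \<epsilon> \<and>
      2 * (\<alpha> / \<omega> * ln (real n) + 2) \<le> real n \<and> 1 \<le> real n"
    by (rule eventually_compose_filterlim[OF _ filterlim_real_sequentially])
  then show ?thesis
  proof eventually_elim
    case (elim n)
    then show ?case by (intro block_decomposition[OF assms]) auto
  qed
qed

lemma one_le_powr_abs_mult_powr:
  fixes b x y :: real
  assumes "1 \<le> x" "x \<le> y"
  shows "1 \<le> y powr \<bar>b\<bar> * x powr (- b)"
proof -
  have "1 = x powr \<bar>b\<bar> * x powr (- \<bar>b\<bar>)" using assms by (simp add: powr_add[symmetric])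
  also have "\<dots> \<le> y powr \<bar>b\<bar> * x powr (- b)"
    using assms by (intro mult_mono powr_mono2 powr_mono) auto
  finally show ?thesis .
qed

lemma le_max_mult_add:
  fixes \<eta> \<xi> a K :: real
  assumes "0 \<le> \<eta>" "1 \<le> \<xi>" "1 \<le> K"
  shows "\<eta> + \<xi> * K \<le> max a K * (\<eta> + \<xi>)" and "a \<le> max a K * (\<eta> + \<xi>)"
proof -
  have "1 \<le> max a K" using assms by (simp add: le_max_iff_disj)
  then have "\<eta> \<le> max a K * \<eta>"
    using mult_right_mono[of 1 "max a K" \<eta>] assms by simp
  moreover have "\<xi> * K \<le> max a K * \<xi>"
    using mult_left_mono[OF max.cobounded2[of K a], of \<xi>] assms by (simp add: mult.commute)
  ultimately show "\<eta> + \<xi> * K \<le> max a K * (\<eta> + \<xi>)" by (simp add: distrib_left)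
  have "max a K * 1 \<le> max a K * (\<eta> + \<xi>)"
    using assms by (intro mult_left_mono) auto
  then show "a \<le> max a K * (\<eta> + \<xi>)" by simp
qed

theorem theorem3p6:
  fixes M :: "'a measure" and K :: "'a \<Rightarrow> 'a measure"
    and P :: "'a \<Rightarrow> 'w measure" and Psi :: "nat \<Rightarrow> 'w \<Rightarrow> 'a"
    and G B C :: "'a set" and \<alpha> \<omega> :: real
    and \<xi> \<eta> :: "'a \<Rightarrow> real" and \<xi>1 :: real
  assumes mc: "markov_chain M K P Psi"
    and G: "G \<in> sets M" and B: "B \<in> sets M"
    and part: "G \<union> B = space M" "G \<inter> B = {}"
    and C: "C \<in> sets M" "C \<subseteq> G"
    and alpha: "\<alpha> > 0"
    and xi_ge: "\<forall>x\<in>space M. \<xi> x \<ge> 1"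
    and xi_sup: "\<forall>x\<in>G. \<xi> x \<le> \<xi>1"
    and tail: "\<forall>x\<in>space M. \<forall>n. \<forall>k::nat. k \<ge> 1 \<longrightarrow> (\<forall>A\<in>sets M.
        emeasure (P x) {w\<in>space (P x). visit_time Psi G n w < \<infinity> \<and>
            induced_chain Psi G n w \<in> A \<and>
            visit_time Psi G (Suc n) w - visit_time Psi G n w > enat k}
        \<le> (\<integral>\<^sup>+ w\<in>{w\<in>space (P x). visit_time Psi G n w < \<infinity> \<and> induced_chain Psi G n w \<in> A}.
               ennreal (\<xi> (induced_chain Psi G n w) * real k powr (-\<alpha>)) \<partial>P x))"
    and omega: "\<omega> > 0"
    and eta_pos: "\<forall>x\<in>space M. \<eta> x > 0"
    and induced_tail: "\<forall>x\<in>space M. \<forall>k::nat.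
        measure (P x) {w\<in>space (P x). induced_return_time Psi G C w > enat k}
          \<le> \<eta> x * exp (- \<omega> * real k)"
  shows "\<forall>\<epsilon>>0. \<exists>c::real. \<forall>x\<in>space M. \<forall>n::nat. n \<ge> 1 \<longrightarrow>
           measure (P x) {w\<in>space (P x). return_time Psi C w > enat n}
             \<le> c * (\<eta> x + \<xi> x) * real n powr (-(\<alpha> - \<epsilon>))"
proof (intro allI impI)
  fix \<epsilon> :: real
  assume "\<epsilon> > 0"
  define \<beta> where "\<beta> = \<alpha> - \<epsilon>"
  obtain N0 where N0: "\<And>n. N0 \<le> n \<Longrightarrow> \<exists>m k. 1 \<le> k \<and> m * k \<le> n \<and>
      exp (- \<omega> * real m) \<le> real n powr (- \<beta>) \<and>
      real m * real k powr (- \<alpha>) \<le> 2 powr \<alpha> * real n powr (- \<beta>)"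
    using eventually_block_decomposition[OF alpha omega \<open>\<epsilon> > 0\<close>]
    unfolding \<beta>_def eventually_sequentially by blast
  define K where "K = max 1 \<xi>1 * 2 powr \<alpha>"
  define c where "c = max (real N0 powr \<bar>\<beta>\<bar>) K"
  have "1 * 1 \<le> K"
    unfolding K_def using alpha by (intro mult_mono ge_one_powr_ge_zero) auto
  then have "1 \<le> K" by simp
  show "\<exists>c. \<forall>x\<in>space M. \<forall>n. 1 \<le> n \<longrightarrow> measure (P x) {w\<in>space (P x). return_time Psi C w > enat n}
      \<le> c * (\<eta> x + \<xi> x) * real n powr (- (\<alpha> - \<epsilon>))"
  proof (intro exI[of _ c] ballI allI impI)
    fix x and n :: nat
    assume x: "x \<in> space M" and "1 \<le> n"
    interpret prob_space "P x" using mc x by (simp add: markov_chain_def)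
    have "0 < \<eta> x" "1 \<le> \<xi> x" using x eta_pos xi_ge by auto
    have "measure (P x) {w\<in>space (P x). return_time Psi C w > enat n}
        \<le> c * (\<eta> x + \<xi> x) * real n powr (- \<beta>)"
    proof (cases "N0 \<le> n")
      case True
      then obtain m k where "1 \<le> k" "m * k \<le> n" "exp (- \<omega> * real m) \<le> real n powr (- \<beta>)"
        "real m * real k powr (- \<alpha>) \<le> 2 powr \<alpha> * real n powr (- \<beta>)"
        using N0 by blast
      then have "measure (P x) {w\<in>space (P x). return_time Psi C w > enat n}
          \<le> (\<eta> x + \<xi> x * K) * real n powr (- \<beta>)"
        using mc x G C(1) xi_sup \<open>1 \<le> \<xi> x\<close> \<open>0 < \<eta> x\<close> tail induced_tail unfolding K_def
        by (intro return_time_tail_le_powr[where M = M]) (auto simp: markov_chain_def)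
      also have "\<dots> \<le> c * (\<eta> x + \<xi> x) * real n powr (- \<beta>)"
        unfolding c_def
        using le_max_mult_add(1)[OF less_imp_le[OF \<open>0 < \<eta> x\<close>] \<open>1 \<le> \<xi> x\<close> \<open>1 \<le> K\<close>]
        by (intro mult_right_mono) auto
      finally show ?thesis .
    next
      case False
      have "measure (P x) {w\<in>space (P x). return_time Psi C w > enat n} \<le> 1" by simp
      also have "1 \<le> real N0 powr \<bar>\<beta>\<bar> * real n powr (- \<beta>)"
        using False \<open>1 \<le> n\<close> by (intro one_le_powr_abs_mult_powr) auto
      also have "\<dots> \<le> c * (\<eta> x + \<xi> x) * real n powr (- \<beta>)"
        unfolding c_def
        using le_max_mult_add(2)[OF less_imp_le[OF \<open>0 < \<eta> x\<close>] \<open>1 \<le> \<xi> x\<close> \<open>1 \<le> K\<close>]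
        by (intro mult_right_mono) auto
      finally show ?thesis .
    qed
    then show "measure (P x) {w\<in>space (P x). return_time Psi C w > enat n}
        \<le> c * (\<eta> x + \<xi> x) * real n powr (- (\<alpha> - \<epsilon>))"
      unfolding \<beta>_def .
  qed
qed

end
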